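(* Let $\mathcal{A}=(Q,\delta,s)$ be an NFA satisfying the standing assumptions below, and run the Ordered Partition Refinement algorithm described below on $\mathcal{A}$. At the beginning of every iteration of its while loop, every part of the ordered partition $\mathcal{P}$ is forward-stable with respect to every part of $\mathcal{X}$.
   Context: $\Sigma=\{a_1<\dots<a_k\}$ is a finite totally ordered alphabet. NFA $\mathcal{A}=(Q,\delta,s)$, $\delta:Q\times\Sigma\to2^Q$, $\delta_a(u)=\delta(u,a)$, $\delta_a(T)=\bigcup_{u\in T}\delta_a(u)$. Standing assumptions: $s$ has no incoming transitions, every state is reachable from $s$, every $v\neq s$ has incoming transitions labeled by exactly one letter $\lambda(v)$, and every letter labels some transition. A set $S\subseteq Q$ is forward-stable with respect to $T\subseteq Q$ if for every $a\in\Sigma$, $S\subseteq\delta_a(T)$ or $S\cap\delta_a(T)=\emptyset$. Algorithm (Ordered Partition Refinement): let $Q_\epsilon=\{s\}$ and $Q_a=\{v:\lambda(v)=a\}$. Initialize the ordered partitions $\mathcal{P}:=\langle Q_\epsilon,Q_{a_1},\dots,Q_{a_k}\rangle$ and $\mathcal{X}:=\langle Q\rangle$. While $\mathcal{X}\neq\mathcal{P}$: let $S$ be the first part of $\mathcal{X}$ that is a union of at least two parts of $\mathcal{P}$; let $B$ be the smaller (in cardinality) of the first and the last part of $\mathcal{P}$ contained in $S$; replace $S$ in $\mathcal{X}$ by $B,S\setminus B$ if $B$ was the first such part, otherwise by $S\setminus B,B$. Then for each part $D$ of $\mathcal{P}$ (those present before this splitting step), with $a=\lambda(D)$ (the common label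 of its states; for the part $\{s\}$ take $D_1=\emptyset$): $D_1:=D\cap\delta_a(B)$, $D_2:=D\setminus D_1$, $D_{11}:=D_1\cap\delta_a(S\setminus B)$, $D_{12}:=D_1\setminus D_{11}$; replace $D$ in $\mathcal{P}$ by the nonempty sets among $D_{12},D_{11},D_2$ in this order if $B$ was the first part, and among $D_2,D_{11},D_{12}$ in this order otherwise. Return $\mathcal{P}$. *)

theory Defs
  imports Main
begin

definition dimg :: "('q \<Rightarrow> 'a \<Rightarrow> 'q set) \<Rightarrow> 'a \<Rightarrow> 'q set \<Rightarrow> 'q set" where
  "dimg delta a T = (\<Union>u\<in>T. delta u a)"

definition nfa_edges :: "'q set \<Rightarrow> 'a set \<Rightarrow> ('q \<Rightarrow> 'a \<Rightarrow> 'q set) \<Rightarrow> ('q \<times> 'q) set" where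
  "nfa_edges Q Sig delta = {(u, v). u \<in> Q \<and> (\<exists>a\<in>Sig. v \<in> delta u a)}"

definition standing :: "'q set \<Rightarrow> 'a set \<Rightarrow> ('q \<Rightarrow> 'a \<Rightarrow> 'q set) \<Rightarrow> 'q \<Rightarrow> bool" where
  "standing Q Sig delta s \<longleftrightarrow>
     finite Q \<and> finite Sig \<and> s \<in> Q \<and>
     (\<forall>u\<in>Q. \<forall>a\<in>Sig. delta u a \<subseteq> Q) \<and>
     (\<forall>u\<in>Q. \<forall>a\<in>Sig. s \<notin> delta u a) \<and>
     (\<forall>v\<in>Q. (s, v) \<in> (nfa_edges Q Sig delta)\<^sup>*) \<and>
     (\<forall>v\<in>Q. v \<noteq> s \<longrightarrow> (\<exists>!a. a \<in> Sig \<and> (\<exists>u\<in>Q. v \<in> delta u a))) \<and>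
     (\<forall>a\<in>Sig. \<exists>u\<in>Q. delta u a \<noteq> {})"

definition lab :: "'q set \<Rightarrow> 'a set \<Rightarrow> ('q \<Rightarrow> 'a \<Rightarrow> 'q set) \<Rightarrow> 'q \<Rightarrow> 'a" where
  "lab Q Sig delta v = (THE a. a \<in> Sig \<and> (\<exists>u\<in>Q. v \<in> delta u a))"

definition forward_stable :: "'a set \<Rightarrow> ('q \<Rightarrow> 'a \<Rightarrow> 'q set) \<Rightarrow> 'q set \<Rightarrow> 'q set \<Rightarrow> bool" where
  "forward_stable Sig delta S T \<longleftrightarrow>
     (\<forall>a\<in>Sig. S \<subseteq> dimg delta a T \<or> S \<inter> dimg delta a T = {})"

definition opr_init :: "'q set \<Rightarrow> 'a::linorder set \<Rightarrow> ('q \<Rightarrow> 'a \<Rightarrow> 'q set) \<Rightarrow> 'q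
    \<Rightarrow> 'q set list \<times> 'q set list" where
  "opr_init Q Sig delta s =
     ([{s}] @ map (\<lambda>a. {v\<in>Q. v \<noteq> s \<and> lab Q Sig delta v = a}) (sorted_list_of_set Sig),
      [Q])"

definition union_ge2 :: "'q set list \<Rightarrow> 'q set \<Rightarrow> bool" where
  "union_ge2 P S \<longleftrightarrow> (\<exists>T. T \<subseteq> set P \<and> 2 \<le> card T \<and> \<Union>T = S)"

definition refine_part :: "'q set \<Rightarrow> 'a set \<Rightarrow> ('q \<Rightarrow> 'a \<Rightarrow> 'q set) \<Rightarrow> 'q
    \<Rightarrow> bool \<Rightarrow> 'q set \<Rightarrow> 'q set \<Rightarrow> 'q set \<Rightarrow> 'q set list" where
  "refine_part Q Sig delta s isfirst B S D =
     (let a = lab Q Sig delta (SOME v. v \<in> D);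
          D1 = (if D = {s} then {} else D \<inter> dimg delta a B);
          D2 = D - D1;
          D11 = D1 \<inter> dimg delta a (S - B);
          D12 = D1 - D11
      in filter (\<lambda>E. E \<noteq> {}) (if isfirst then [D12, D11, D2] else [D2, D11, D12]))"

text \<open>One iteration of the while loop (body), applied when X differs from P.
  Ties in the choice of B are broken in favour of the first part.\<close>
definition opr_step :: "'q set \<Rightarrow> 'a set \<Rightarrow> ('q \<Rightarrow> 'a \<Rightarrow> 'q set) \<Rightarrow> 'q
    \<Rightarrow> 'q set list \<times> 'q set list \<Rightarrow> 'q set list \<times> 'q set list" where
  "opr_step Q Sig delta s PX =
     (let P = fst PX; X = snd PX in
      case find (union_ge2 P) X of
        None \<Rightarrow> (P, X)
      | Some S \<Rightarrow>
          (let Fst = hd (filter (\<lambda>D. D \<subseteq> S) P);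
               Lst = last (filter (\<lambda>D. D \<subseteq> S) P);
               isfirst = (card Fst \<le> card Lst);
               B = (if isfirst then Fst else Lst);
               X' = concat (map (\<lambda>T. if T = S then (if isfirst then [B, S - B] else [S - B, B])
                                     else [T]) X);
               P' = concat (map (refine_part Q Sig delta s isfirst B S) P)
           in (P', X')))"

text \<open>State at the beginning of iteration n (if the loop has not stopped before).\<close>
definition opr_state :: "'q set \<Rightarrow> 'a::linorder set \<Rightarrow> ('q \<Rightarrow> 'a \<Rightarrow> 'q set) \<Rightarrow> 'q
    \<Rightarrow> nat \<Rightarrow> 'q set list \<times> 'q set list" where
  "opr_state Q Sig delta s n = (opr_step Q Sig delta s ^^ n) (opr_init Q Sig delta s)"

end

theory Submission
  imports Defs
begin

text \<open>The claim is a loop invariant, strengthened by two facts: all states of a part of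
  \<open>P\<close> carry the same label, and all parts lie inside \<open>Q\<close>. Stability of a part \<open>D\<close> with
  respect to a letter \<open>c\<close> other than its label is then automatic, because \<open>\<delta>\<^sub>c(T)\<close> only
  contains states labelled \<open>c\<close>. For the label \<open>a\<close> of \<open>D\<close>, the refinement cuts \<open>D\<close> along
  \<open>\<delta>\<^sub>a(B)\<close> and \<open>\<delta>\<^sub>a(S - B)\<close>; the piece outside \<open>\<delta>\<^sub>a(B)\<close> is stable with respect to \<open>S - B\<close>
  because \<open>D\<close> was stable with respect to \<open>S\<close> and \<open>\<delta>\<^sub>a(S) = \<delta>\<^sub>a(B) \<union> \<delta>\<^sub>a(S - B)\<close>.\<close>

lemma lab_of_transition:
  assumes st: "standing Q Sig delta s" and "u \<in> Q" "c \<in> Sig" "v \<in> delta u c"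
  shows "lab Q Sig delta v = c"
proof -
  have "v \<in> Q" "v \<noteq> s" using st assms(2-4) unfolding standing_def by blast+
  then have "\<exists>!a. a \<in> Sig \<and> (\<exists>u\<in>Q. v \<in> delta u a)" using st unfolding standing_def by blast
  then show ?thesis unfolding lab_def by (rule the1_equality) (use assms(2-4) in blast)
qed

lemma lab_of_dimg:
  assumes "standing Q Sig delta s" "T \<subseteq> Q" "c \<in> Sig" "v \<in> dimg delta c T"
  shows "lab Q Sig delta v = c"
  using assms lab_of_transition[OF assms(1)] unfolding dimg_def by blast

lemma start_notin_dimg:
  assumes "standing Q Sig delta s" "T \<subseteq> Q" "c \<in> Sig"
  shows "s \<notin> dimg delta c T"
  using assms unfolding standing_def dimg_def by blast

lemma in_dimg_lab:
  assumes st: "standing Q Sig delta s" and "v \<in> Q" "v \<noteq> s"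
  shows "v \<in> dimg delta (lab Q Sig delta v) Q"
proof -
  obtain u c where "u \<in> Q" "c \<in> Sig" "v \<in> delta u c"
    using st assms(2,3) unfolding standing_def by blast
  moreover from this have "lab Q Sig delta v = c" by (rule lab_of_transition[OF st])
  ultimately show ?thesis unfolding dimg_def by blast
qed

lemma forward_stable_subset:
  "forward_stable Sig delta D T \<Longrightarrow> E \<subseteq> D \<Longrightarrow> forward_stable Sig delta E T"
  unfolding forward_stable_def by blast

lemma forward_stable_if_same_lab:
  assumes st: "standing Q Sig delta s" and T: "T \<subseteq> Q"
    and lab: "\<forall>v\<in>E. lab Q Sig delta v = a"
    and a: "a \<in> Sig \<Longrightarrow> E \<subseteq> dimg delta a T \<or> E \<inter> dimg delta a T = {}"
  shows "forward_stable Sig delta E T"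
  unfolding forward_stable_def
proof
  fix c assume c: "c \<in> Sig"
  show "E \<subseteq> dimg delta c T \<or> E \<inter> dimg delta c T = {}"
  proof (cases "c = a")
    case True
    then show ?thesis using a c by blast
  next
    case False
    then show ?thesis using lab lab_of_dimg[OF st T c] by blast
  qed
qed

definition opr_invariant ::
    "'q set \<Rightarrow> 'a set \<Rightarrow> ('q \<Rightarrow> 'a \<Rightarrow> 'q set) \<Rightarrow> 'q set list \<Rightarrow> 'q set list \<Rightarrow> bool" where
  "opr_invariant Q Sig delta P X \<longleftrightarrow>
     (\<forall>D\<in>set P. D \<subseteq> Q \<and> (\<exists>a. \<forall>v\<in>D. lab Q Sig delta v = a)) \<and>
     (\<forall>T\<in>set X. T \<subseteq> Q) \<and>
     (\<forall>D\<in>set P. \<forall>T\<in>set X. forward_stable Sig delta D T)"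

lemma opr_invariant_init:
  assumes st: "standing Q Sig delta s"
  shows "opr_invariant Q Sig delta (fst (opr_init Q Sig delta s)) (snd (opr_init Q Sig delta s))"
proof -
  have "s \<in> Q" using st unfolding standing_def by blast
  moreover have "forward_stable Sig delta {s} Q"
    using forward_stable_if_same_lab[OF st order_refl] start_notin_dimg[OF st order_refl] by blast
  moreover have "forward_stable Sig delta {v\<in>Q. v \<noteq> s \<and> lab Q Sig delta v = a} Q" for a
  proof (rule forward_stable_if_same_lab[OF st order_refl])
    have "{v\<in>Q. v \<noteq> s \<and> lab Q Sig delta v = a} \<subseteq> dimg delta a Q"
      using in_dimg_lab[OF st] by blast
    then show "{v\<in>Q. v \<noteq> s \<and> lab Q Sig delta v = a} \<subseteq> dimg delta a Q \<or>
      {v\<in>Q. v \<noteq> s \<and> lab Q Sig delta v = a} \<inter> dimg delta a Q = {}" ..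
  qed simp
  ultimately show ?thesis unfolding opr_invariant_def opr_init_def by auto
qed

lemma refine_part_stable:
  assumes st: "standing Q Sig delta s"
    and hom: "\<forall>v\<in>D. lab Q Sig delta v = a'"
    and DS: "forward_stable Sig delta D S"
    and BQ: "B \<subseteq> Q" and SQ: "S \<subseteq> Q"
    and E: "E \<in> set (refine_part Q Sig delta s isfirst B S D)"
  shows "E \<subseteq> D" "forward_stable Sig delta E B" "forward_stable Sig delta E (S - B)"
proof -
  define a where "a = lab Q Sig delta (SOME v. v \<in> D)"
  define D1 where "D1 = (if D = {s} then {} else D \<inter> dimg delta a B)"
  have E_ne: "E \<noteq> {}"
    and pieces: "E \<in> {D1 - dimg delta a (S - B), D1 \<inter> dimg delta a (S - B), D - D1}"
    using E unfolding refine_part_def Let_def a_def D1_def by (auto split: if_splits simp: Diff_Int)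
  have "D1 \<subseteq> D" unfolding D1_def by auto
  then show ED: "E \<subseteq> D" using pieces by blast
  with E_ne have "(SOME v. v \<in> D) \<in> D" by (auto intro: someI)
  then have "a = a'" using hom unfolding a_def by blast
  then have labE: "\<forall>v\<in>E. lab Q Sig delta v = a" using hom ED by blast
  have D1: "D1 = D \<inter> dimg delta a B" if "a \<in> Sig"
    using start_notin_dimg[OF st BQ that] unfolding D1_def by auto
  show "forward_stable Sig delta E B"
  proof (rule forward_stable_if_same_lab[OF st BQ labE])
    assume "a \<in> Sig"
    then show "E \<subseteq> dimg delta a B \<or> E \<inter> dimg delta a B = {}"
      using pieces D1 by blast
  qed
  have SBQ: "S - B \<subseteq> Q" using SQ by blast
  show "forward_stable Sig delta E (S - B)"
  proof (rule forward_stable_if_same_lab[OF st SBQ labE])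
    assume a: "a \<in> Sig"
    have "D \<subseteq> dimg delta a S \<or> D \<inter> dimg delta a S = {}"
      using DS a unfolding forward_stable_def by blast
    moreover have "dimg delta a S \<subseteq> dimg delta a B \<union> dimg delta a (S - B)"
      and "dimg delta a (S - B) \<subseteq> dimg delta a S" unfolding dimg_def by blast+
    ultimately have "D - D1 \<subseteq> dimg delta a (S - B) \<or> (D - D1) \<inter> dimg delta a (S - B) = {}"
      using D1[OF a] by blast
    then show "E \<subseteq> dimg delta a (S - B) \<or> E \<inter> dimg delta a (S - B) = {}"
      using pieces by blast
  qed
qed

lemma union_ge2_has_part:
  assumes "union_ge2 P S"
  shows "filter (\<lambda>D. D \<subseteq> S) P \<noteq> []"
proof -
  obtain T where T: "T \<subseteq> set P" "2 \<le> card T" "\<Union>T = S"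
    using assms unfolding union_ge2_def by blast
  then obtain D where "D \<in> T" by fastforce
  with T have "D \<in> set (filter (\<lambda>D. D \<subseteq> S) P)" by auto
  then show ?thesis by (metis empty_iff empty_set)
qed

lemma opr_invariant_step:
  assumes st: "standing Q Sig delta s" and inv: "opr_invariant Q Sig delta P X"
  shows "opr_invariant Q Sig delta
           (fst (opr_step Q Sig delta s (P, X))) (snd (opr_step Q Sig delta s (P, X)))"
proof (cases "find (union_ge2 P) X")
  case None
  then show ?thesis using inv unfolding opr_step_def by simp
next
  case (Some S)
  then have SX: "S \<in> set X" and "union_ge2 P S" by (auto simp: find_Some_iff)
  define Ps where "Ps = filter (\<lambda>D. D \<subseteq> S) P"
  define isfirst where "isfirst = (card (hd Ps) \<le> card (last Ps))"
  define B where "B = (if isfirst then hd Ps else last Ps)"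
  define X' where "X' = concat (map (\<lambda>T. if T = S then (if isfirst then [B, S - B] else [S - B, B])
                                         else [T]) X)"
  define P' where "P' = concat (map (refine_part Q Sig delta s isfirst B S) P)"
  have step: "opr_step Q Sig delta s (P, X) = (P', X')"
    using Some unfolding opr_step_def Let_def fst_conv snd_conv
    unfolding X'_def P'_def B_def isfirst_def Ps_def by simp
  have "Ps \<noteq> []" using \<open>union_ge2 P S\<close> union_ge2_has_part unfolding Ps_def by blast
  then have "B \<in> set Ps" unfolding B_def by simp
  then have BP: "B \<in> set P" unfolding Ps_def by simp
  have SQ: "S \<subseteq> Q" and BQ: "B \<subseteq> Q" using inv SX BP unfolding opr_invariant_def by blast+
  have X': "set X' \<subseteq> set X \<union> {B, S - B}" unfolding X'_def by auto
  have P': "\<exists>D\<in>set P. E \<in> set (refine_part Q Sig delta s isfirst B S D)" if "E \<in> set P'" for E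
    using that unfolding P'_def by auto
  have "E \<subseteq> Q \<and> (\<exists>a. \<forall>v\<in>E. lab Q Sig delta v = a) \<and>
        (\<forall>T\<in>set X'. forward_stable Sig delta E T)" if EP': "E \<in> set P'" for E
  proof -
    obtain D where D: "D \<in> set P" and E: "E \<in> set (refine_part Q Sig delta s isfirst B S D)"
      using P'[OF EP'] by blast
    have DQ: "D \<subseteq> Q" and "\<exists>a. \<forall>v\<in>D. lab Q Sig delta v = a"
      and stable: "\<forall>T\<in>set X. forward_stable Sig delta D T"
      using inv D unfolding opr_invariant_def by simp_all
    then obtain a where hom: "\<forall>v\<in>D. lab Q Sig delta v = a" by blast
    note refined = refine_part_stable[OF st hom stable[rule_format, OF SX] BQ SQ E]
    have "E \<subseteq> Q" "\<forall>v\<in>E. lab Q Sig delta v = a" using refined(1) DQ hom by blast+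
    moreover have "forward_stable Sig delta E T" if "T \<in> set X'" for T
    proof -
      have "T \<in> set X \<or> T = B \<or> T = S - B" using X' that by blast
      then show ?thesis
        using stable forward_stable_subset[OF _ refined(1)] refined(2,3) by blast
    qed
    ultimately show ?thesis by blast
  qed
  moreover have "\<forall>T\<in>set X'. T \<subseteq> Q" using inv X' SQ BQ unfolding opr_invariant_def by blast
  ultimately show ?thesis unfolding step opr_invariant_def by simp
qed

lemma opr_invariant_state:
  assumes "standing Q Sig delta s"
  shows "opr_invariant Q Sig delta
           (fst (opr_state Q Sig delta s n)) (snd (opr_state Q Sig delta s n))"
proof (induction n)
  case 0
  show ?case using opr_invariant_init[OF assms] unfolding opr_state_def by simp
next
  case (Suc n)
  have "opr_state Q Sig delta s (Suc n) = opr_step Q Sig delta s (opr_state Q Sig delta s n)"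
    unfolding opr_state_def by simp
  then show ?case using opr_invariant_step[OF assms Suc] by simp
qed

text \<open>The invariant holds after any number of steps.\<close>

theorem lemma10:
  fixes Q :: "'q set" and Sig :: "'a::linorder set"
    and delta :: "'q \<Rightarrow> 'a \<Rightarrow> 'q set" and s :: 'q and n :: nat
  assumes "standing Q Sig delta s"
    and "\<forall>m\<le>n. fst (opr_state Q Sig delta s m) \<noteq> snd (opr_state Q Sig delta s m)"
  shows "\<forall>D\<in>set (fst (opr_state Q Sig delta s n)).
           \<forall>T\<in>set (snd (opr_state Q Sig delta s n)). forward_stable Sig delta D T"
  using opr_invariant_state[OF assms(1)] unfolding opr_invariant_def by blast

end
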